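(* Let $M$ be a complete pointed metric space. Then $\delta(M)=\{\delta(x):x\in M\}$ is a weakly closed subset of $\mathcal F(M)$.
   Context: A pointed metric space $M$ has a distinguished origin $0$. $\mathrm{Lip}_0(M)$ is the Banach space of real Lipschitz functions on $M$ vanishing at $0$ with the best Lipschitz constant as norm; $\delta(x)\in\mathrm{Lip}_0(M)^*$ is evaluation at $x$, and the Lipschitz free space $\mathcal F(M)$ is the closed linear span of $\delta(M)$ in $\mathrm{Lip}_0(M)^*$, with $\mathcal F(M)^*=\mathrm{Lip}_0(M)$. "Weakly" refers to the weak topology $\sigma(\mathcal F(M),\mathrm{Lip}_0(M))$. *)

theory Defs
  imports "HOL-Analysis.Analysis"
begin

text \<open>Pointed metric space: a metric space type 'a with distinguished origin z.\<close>

definition Lip0 :: "'a::metric_space \<Rightarrow> ('a \<Rightarrow> real) set" where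
  "Lip0 z = {f. (\<exists>L. L-lipschitz_on UNIV f) \<and> f z = 0}"

definition lipnorm :: "('a::metric_space \<Rightarrow> real) \<Rightarrow> real" where
  "lipnorm f = Inf {L. L-lipschitz_on UNIV f}"

text \<open>Elements of Lip_0(M)^* are modelled as functionals on Lip0 z, extensional
  (value undefined) outside Lip0 z.\<close>
definition Lip0_dual :: "'a::metric_space \<Rightarrow> (('a \<Rightarrow> real) \<Rightarrow> real) set" where
  "Lip0_dual z = {\<phi> \<in> Lip0 z \<rightarrow>\<^sub>E UNIV.
      (\<forall>f\<in>Lip0 z. \<forall>g\<in>Lip0 z. \<forall>a b. \<phi> (\<lambda>x. a * f x + b * g x) = a * \<phi> f + b * \<phi> g) \<and>
      (\<exists>C. \<forall>f\<in>Lip0 z. \<bar>\<phi> f\<bar> \<le> C * lipnorm f)}"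

definition dual_norm :: "'a::metric_space \<Rightarrow> (('a \<Rightarrow> real) \<Rightarrow> real) \<Rightarrow> real" where
  "dual_norm z \<phi> = (SUP f\<in>{f\<in>Lip0 z. lipnorm f \<le> 1}. \<bar>\<phi> f\<bar>)"

definition delta :: "'a::metric_space \<Rightarrow> 'a \<Rightarrow> (('a \<Rightarrow> real) \<Rightarrow> real)" where
  "delta z x = (\<lambda>f\<in>Lip0 z. f x)"

definition delta_span :: "'a::metric_space \<Rightarrow> (('a \<Rightarrow> real) \<Rightarrow> real) set" where
  "delta_span z = {(\<lambda>f\<in>Lip0 z. \<Sum>x\<in>S. c x * f x) | S c. finite S}"

definition FreeSpace :: "'a::metric_space \<Rightarrow> (('a \<Rightarrow> real) \<Rightarrow> real) set" where
  "FreeSpace z = {\<phi> \<in> Lip0_dual z.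
      \<forall>e>0. \<exists>\<psi>\<in>delta_span z. dual_norm z (\<lambda>f. \<phi> f - \<psi> f) < e}"

text \<open>Weak topology sigma(F(M), Lip_0(M)) on F(M): pointwise convergence on Lip_0(M).\<close>
definition weak_top_Free :: "'a::metric_space \<Rightarrow> (('a \<Rightarrow> real) \<Rightarrow> real) topology" where
  "weak_top_Free z = subtopology (powertop_real (Lip0 z)) (FreeSpace z)"

end

theory Submission
  imports Defs
begin

text \<open>Let \<open>\<phi>\<in>\<F>(M)\<close> lie in the weak closure of \<open>\<delta>(M)\<close>. Testing \<open>\<phi>\<close> against the
  functions \<open>y \<mapsto> d(y,a) - d(0,a)\<close> yields a function \<open>g\<close> on \<open>M\<close> that behaves like the
  distance from \<open>a\<close> to a "virtual point": \<open>d(a,b) \<le> g a + g b\<close> and \<open>g\<close> is 1-Lipschitz.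
  Approximating \<open>\<phi>\<close> in norm by a finitely supported \<open>\<psi>\<close> and testing against the distance
  to the support of \<open>\<psi>\<close> shows \<open>inf g = 0\<close>. Points with \<open>g\<close> small then form a Cauchy
  sequence, whose limit \<open>x\<^sub>0\<close> (by completeness) satisfies \<open>g x\<^sub>0 = 0\<close>; this forces
  \<open>\<phi> = \<delta>(x\<^sub>0)\<close>.\<close>

lemma Lip0I: "L-lipschitz_on UNIV f \<Longrightarrow> f z = 0 \<Longrightarrow> f \<in> Lip0 z"
  unfolding Lip0_def by blast

lemma Lip0_vanishes: "f \<in> Lip0 z \<Longrightarrow> f z = 0"
  unfolding Lip0_def by blast

lemma lipnorm_le: "L-lipschitz_on UNIV f \<Longrightarrow> lipnorm f \<le> L"
  unfolding lipnorm_def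
  by (rule cInf_lower) (auto intro!: bdd_belowI[of _ 0] simp: lipschitz_on_def)

lemma lipnorm_nonneg:
  assumes "f \<in> Lip0 z"
  shows "0 \<le> lipnorm f"
proof -
  obtain L where "L-lipschitz_on UNIV f" using assms by (auto simp: Lip0_def)
  then show ?thesis
    unfolding lipnorm_def by (intro cInf_greatest) (auto simp: lipschitz_on_def)
qed

lemma Lip0_lipnorm_bound:
  assumes "f \<in> Lip0 z"
  shows "\<bar>f x - f y\<bar> \<le> lipnorm f * dist x y"
proof (cases "x = y")
  case False
  then have d: "dist x y > 0" by simp
  obtain L0 where "L0-lipschitz_on UNIV f" using assms by (auto simp: Lip0_def)
  then have "{L. L-lipschitz_on UNIV f} \<noteq> {}" by blast
  then have "\<bar>f x - f y\<bar> / dist x y \<le> lipnorm f"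
    unfolding lipnorm_def
    using d by (intro cInf_greatest) (auto simp: lipschitz_on_def dist_real_def divide_le_eq)
  then show ?thesis using d by (simp add: divide_le_eq)
qed simp

lemma Lip0_lincomb:
  assumes "f \<in> Lip0 z" "g \<in> Lip0 z"
  shows "(\<lambda>x. a * f x + b * g x) \<in> Lip0 z"
proof -
  obtain L1 L2 where "L1-lipschitz_on UNIV f" "L2-lipschitz_on UNIV g"
    using assms by (auto simp: Lip0_def)
  then have "(\<bar>a\<bar> * L1 + \<bar>b\<bar> * L2)-lipschitz_on UNIV (\<lambda>x. a * f x + b * g x)"
    by (intro lipschitz_on_add lipschitz_on_cmult_real)
  then show ?thesis using assms by (auto simp: Lip0_def intro: Lip0I)
qed

lemma abs_le_dual_norm:
  assumes bounded: "\<forall>f\<in>Lip0 z. \<bar>\<theta> f\<bar> \<le> C * lipnorm f"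
    and f: "f \<in> Lip0 z" "lipnorm f \<le> 1"
  shows "\<bar>\<theta> f\<bar> \<le> dual_norm z \<theta>"
  unfolding dual_norm_def
proof (rule cSUP_upper)
  show "bdd_above ((\<lambda>f. \<bar>\<theta> f\<bar>) ` {f \<in> Lip0 z. lipnorm f \<le> 1})"
  proof (rule bdd_aboveI2)
    fix f assume "f \<in> {f \<in> Lip0 z. lipnorm f \<le> 1}"
    then have "\<bar>\<theta> f\<bar> \<le> C * lipnorm f" "0 \<le> lipnorm f" "lipnorm f \<le> 1"
      using bounded lipnorm_nonneg by auto
    then have "\<bar>\<theta> f\<bar> \<le> \<bar>C\<bar> * lipnorm f"
      using mult_right_mono[OF abs_ge_self, of "lipnorm f" C] by linarith
    also have "\<dots> \<le> \<bar>C\<bar>"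
      using \<open>lipnorm f \<le> 1\<close> mult_left_mono[of "lipnorm f" 1 "\<bar>C\<bar>"] by simp
    finally show "\<bar>\<theta> f\<bar> \<le> \<bar>C\<bar>" .
  qed
qed (use f in auto)

lemma dual_norm_zero: "dual_norm z (\<lambda>f. 0) = 0"
proof -
  have "lipnorm (\<lambda>_::'a. 0::real) \<le> 0"
    by (rule lipnorm_le[OF lipschitz_on_constant])
  then have "{f \<in> Lip0 z. lipnorm f \<le> 1} \<noteq> {}"
    by (auto intro: Lip0I[OF lipschitz_on_constant])
  then show ?thesis by (simp add: dual_norm_def)
qed

lemma delta_in_delta_span: "delta z x \<in> delta_span z"
  unfolding delta_span_def delta_def
  by (rule CollectI, rule exI[of _ "{x}"], rule exI[of _ "\<lambda>_. 1"]) simp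

lemma delta_span_bounded:
  assumes "\<psi> \<in> delta_span z"
  obtains C where "\<forall>f\<in>Lip0 z. \<bar>\<psi> f\<bar> \<le> C * lipnorm f"
proof -
  obtain S c where \<psi>: "\<psi> = (\<lambda>f\<in>Lip0 z. \<Sum>x\<in>S. c x * f x)"
    using assms unfolding delta_span_def by blast
  have "\<bar>\<psi> f\<bar> \<le> (\<Sum>x\<in>S. \<bar>c x\<bar> * dist x z) * lipnorm f" if f: "f \<in> Lip0 z" for f
  proof -
    have "\<bar>\<psi> f\<bar> \<le> (\<Sum>x\<in>S. \<bar>c x * f x\<bar>)" using f by (simp add: \<psi> sum_abs)
    also have "\<dots> \<le> (\<Sum>x\<in>S. \<bar>c x\<bar> * (dist x z * lipnorm f))"
    proof (rule sum_mono)
      fix x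
      have "\<bar>f x\<bar> \<le> dist x z * lipnorm f"
        using Lip0_lipnorm_bound[OF f, of x z] Lip0_vanishes[OF f] by (simp add: mult.commute)
      then show "\<bar>c x * f x\<bar> \<le> \<bar>c x\<bar> * (dist x z * lipnorm f)"
        by (simp add: abs_mult mult_left_mono)
    qed
    finally show ?thesis by (simp add: sum_distrib_right mult.assoc)
  qed
  then show ?thesis using that by blast
qed

lemma delta_span_subset_Lip0_dual: "delta_span z \<subseteq> Lip0_dual z"
proof
  fix \<psi> assume \<psi>: "\<psi> \<in> delta_span z"
  then obtain S c where \<psi>_eq: "\<psi> = (\<lambda>f\<in>Lip0 z. \<Sum>x\<in>S. c x * f x)"
    unfolding delta_span_def by blast
  have "\<psi> (\<lambda>x. a * f x + b * g x) = a * \<psi> f + b * \<psi> g"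
    if "f \<in> Lip0 z" "g \<in> Lip0 z" for f g a b
    using that Lip0_lincomb[OF that]
    by (simp add: \<psi>_eq sum.distrib sum_distrib_left algebra_simps)
  moreover obtain C where "\<forall>f\<in>Lip0 z. \<bar>\<psi> f\<bar> \<le> C * lipnorm f"
    using delta_span_bounded[OF \<psi>] .
  ultimately show "\<psi> \<in> Lip0_dual z"
    unfolding Lip0_dual_def by (auto simp: \<psi>_eq)
qed

lemma delta_span_subset_FreeSpace: "delta_span z \<subseteq> FreeSpace z"
proof
  fix \<psi> assume "\<psi> \<in> delta_span z"
  moreover have "dual_norm z (\<lambda>f. \<psi> f - \<psi> f) = 0" using dual_norm_zero by simp
  ultimately show "\<psi> \<in> FreeSpace z"
    using delta_span_subset_Lip0_dual unfolding FreeSpace_def by force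
qed

lemma infdist_lipschitz: "1-lipschitz_on UNIV (\<lambda>y. infdist y S)"
  by (rule lipschitz_onI) (auto simp: dist_real_def infdist_triangle_abs)

text \<open>The distance to the support of a norm-approximant of \<open>\<phi>\<close> is annihilated by the
  approximant and has norm at most one, so \<open>\<phi>\<close> is small on it.\<close>

lemma FreeSpace_small_on_infdist:
  assumes \<phi>: "\<phi> \<in> FreeSpace z" and e: "e > 0"
  obtains S where "finite S" "z \<in> S" "\<phi> (\<lambda>y. infdist y S) < e"
proof -
  obtain \<psi> where \<psi>: "\<psi> \<in> delta_span z" and approx: "dual_norm z (\<lambda>f. \<phi> f - \<psi> f) < e"
    using \<phi> e unfolding FreeSpace_def by blast
  obtain S c where S: "finite S" and \<psi>_eq: "\<psi> = (\<lambda>f\<in>Lip0 z. \<Sum>x\<in>S. c x * f x)"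
    using \<psi> unfolding delta_span_def by blast
  obtain C1 where C1: "\<forall>f\<in>Lip0 z. \<bar>\<phi> f\<bar> \<le> C1 * lipnorm f"
    using \<phi> unfolding FreeSpace_def Lip0_dual_def by blast
  obtain C2 where C2: "\<forall>f\<in>Lip0 z. \<bar>\<psi> f\<bar> \<le> C2 * lipnorm f"
    using delta_span_bounded[OF \<psi>] .
  have bounded: "\<forall>f\<in>Lip0 z. \<bar>\<phi> f - \<psi> f\<bar> \<le> (C1 + C2) * lipnorm f"
  proof
    fix f assume "f \<in> Lip0 z"
    then have "\<bar>\<phi> f\<bar> + \<bar>\<psi> f\<bar> \<le> (C1 + C2) * lipnorm f"
      using C1 C2 by (simp add: distrib_right add_mono)
    then show "\<bar>\<phi> f - \<psi> f\<bar> \<le> (C1 + C2) * lipnorm f"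
      using abs_triangle_ineq4 order_trans by blast
  qed
  define h where "h = (\<lambda>y. infdist y (insert z S))"
  have h: "h \<in> Lip0 z" "lipnorm h \<le> 1"
    unfolding h_def by (auto intro: Lip0I[OF infdist_lipschitz] lipnorm_le[OF infdist_lipschitz])
  have "\<psi> h = 0" using h by (simp add: \<psi>_eq h_def)
  then have "\<phi> h \<le> dual_norm z (\<lambda>f. \<phi> f - \<psi> f)"
    using abs_le_dual_norm[OF bounded h] by simp
  then show ?thesis using that[of "insert z S"] S approx by (simp add: h_def)
qed

definition delta_adherent :: "'a::metric_space \<Rightarrow> (('a \<Rightarrow> real) \<Rightarrow> real) \<Rightarrow> bool" where
  "delta_adherent z \<phi> \<longleftrightarrow>
     (\<forall>F \<eta>. finite F \<longrightarrow> F \<subseteq> Lip0 z \<longrightarrow> \<eta> > 0 \<longrightarrow> (\<exists>x. \<forall>f\<in>F. \<bar>f x - \<phi> f\<bar> < \<eta>))"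

definition centered_dist :: "'a::metric_space \<Rightarrow> 'a \<Rightarrow> 'a \<Rightarrow> real" where
  "centered_dist z a = (\<lambda>y. dist y a - dist z a)"

text \<open>For \<open>\<phi> = delta z x\<close> this is \<open>dist x a\<close>.\<close>

definition virtual_dist :: "'a::metric_space \<Rightarrow> (('a \<Rightarrow> real) \<Rightarrow> real) \<Rightarrow> 'a \<Rightarrow> real" where
  "virtual_dist z \<phi> a = \<phi> (centered_dist z a) + dist z a"

lemma centered_dist_Lip0: "centered_dist z a \<in> Lip0 z"
proof (rule Lip0I)
  show "1-lipschitz_on UNIV (centered_dist z a)"
  proof (rule lipschitz_onI)
    fix x y :: 'a
    have "\<bar>dist x a - dist y a\<bar> \<le> dist x y"
      using dist_triangle[of x a y] dist_triangle[of y a x] by (simp add: dist_commute abs_le_iff)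
    then show "dist (centered_dist z a x) (centered_dist z a y) \<le> 1 * dist x y"
      by (simp add: centered_dist_def dist_real_def)
  qed simp
qed (simp add: centered_dist_def)

lemma delta_adherent_witness:
  assumes "delta_adherent z \<phi>" "finite F" "F \<subseteq> Lip0 z" "finite A" "\<eta> > 0"
  obtains x where "\<forall>f\<in>F. \<bar>f x - \<phi> f\<bar> < \<eta>" "\<forall>a\<in>A. \<bar>dist x a - virtual_dist z \<phi> a\<bar> < \<eta>"
proof -
  have "finite (F \<union> centered_dist z ` A)" "F \<union> centered_dist z ` A \<subseteq> Lip0 z"
    using assms centered_dist_Lip0 by auto
  then obtain x where x: "\<forall>f\<in>F \<union> centered_dist z ` A. \<bar>f x - \<phi> f\<bar> < \<eta>"
    using assms unfolding delta_adherent_def by blast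
  show ?thesis
  proof (rule that)
    show "\<forall>f\<in>F. \<bar>f x - \<phi> f\<bar> < \<eta>" using x by blast
    show "\<forall>a\<in>A. \<bar>dist x a - virtual_dist z \<phi> a\<bar> < \<eta>"
    proof
      fix a assume "a \<in> A"
      then have "\<bar>centered_dist z a x - \<phi> (centered_dist z a)\<bar> < \<eta>" using x by blast
      then show "\<bar>dist x a - virtual_dist z \<phi> a\<bar> < \<eta>"
        by (simp add: centered_dist_def virtual_dist_def)
    qed
  qed
qed

lemma virtual_dist_triangle:
  assumes "delta_adherent z \<phi>"
  shows "dist a b \<le> virtual_dist z \<phi> a + virtual_dist z \<phi> b"
proof (rule field_le_epsilon)
  fix e :: real assume "e > 0"
  then obtain x where "\<bar>dist x a - virtual_dist z \<phi> a\<bar> < e / 2"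
    "\<bar>dist x b - virtual_dist z \<phi> b\<bar> < e / 2"
    using delta_adherent_witness[OF assms, of "{}" "{a, b}" "e / 2"] by auto
  moreover have "dist a b \<le> dist x a + dist x b" by (rule dist_triangle3)
  ultimately show "dist a b \<le> virtual_dist z \<phi> a + virtual_dist z \<phi> b + e"
    by arith
qed

lemma virtual_dist_le_add_dist:
  assumes "delta_adherent z \<phi>"
  shows "virtual_dist z \<phi> a \<le> virtual_dist z \<phi> b + dist a b"
proof (rule field_le_epsilon)
  fix e :: real assume "e > 0"
  then obtain x where "\<bar>dist x a - virtual_dist z \<phi> a\<bar> < e / 2"
    "\<bar>dist x b - virtual_dist z \<phi> b\<bar> < e / 2"
    using delta_adherent_witness[OF assms, of "{}" "{a, b}" "e / 2"] by auto
  moreover have "dist x a \<le> dist x b + dist a b" by (rule dist_triangle2)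
  ultimately show "virtual_dist z \<phi> a \<le> virtual_dist z \<phi> b + dist a b + e"
    by arith
qed

lemma virtual_dist_approx_zero:
  assumes \<phi>: "\<phi> \<in> FreeSpace z" and adh: "delta_adherent z \<phi>" and e: "e > 0"
  obtains s where "virtual_dist z \<phi> s < e"
proof -
  obtain S where S: "finite S" "z \<in> S" and small: "\<phi> (\<lambda>y. infdist y S) < e / 3"
    using FreeSpace_small_on_infdist[OF \<phi>, of "e / 3"] e by auto
  have "(\<lambda>y. infdist y S) \<in> Lip0 z"
    using S by (auto intro: Lip0I[OF infdist_lipschitz])
  then obtain x where x: "\<bar>infdist x S - \<phi> (\<lambda>y. infdist y S)\<bar> < e / 3"
    and near: "\<forall>a\<in>S. \<bar>dist x a - virtual_dist z \<phi> a\<bar> < e / 3"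
    using delta_adherent_witness[OF adh, of "{\<lambda>y. infdist y S}" S "e / 3"] S e by auto
  have "S \<noteq> {}" using S by auto
  have "infdist x S < 2 * e / 3" using x small by arith
  then have "(INF a\<in>S. dist x a) < 2 * e / 3" by (metis infdist_notempty \<open>S \<noteq> {}\<close>)
  then obtain s where "s \<in> S" and "dist x s < 2 * e / 3"
    using cINF_less_iff[OF \<open>S \<noteq> {}\<close> bdd_below_image_dist] by blast
  moreover have "\<bar>dist x s - virtual_dist z \<phi> s\<bar> < e / 3" using near \<open>s \<in> S\<close> by blast
  ultimately show ?thesis using that[of s] by arith
qed

text \<open>A function behaving like the distance to a point of the completion, and taking
  arbitrarily small values, vanishes at a genuine point.\<close>

lemma dist_function_attains_zero:
  fixes g :: "'a::complete_space \<Rightarrow> real"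
  assumes triangle: "\<And>a b. dist a b \<le> g a + g b"
    and lipschitz: "\<And>a b. g a \<le> g b + dist a b"
    and small: "\<And>e. e > 0 \<Longrightarrow> \<exists>s. g s < e"
  shows "\<exists>x. g x = 0"
proof -
  have nonneg: "0 \<le> g a" for a using triangle[of a a] by simp
  have "\<exists>s. g s < inverse (real (Suc n))" for n by (rule small) simp
  then obtain s where s: "\<And>n. g (s n) < inverse (real (Suc n))" by metis
  have g_s: "(\<lambda>n. g (s n)) \<longlonglongrightarrow> 0"
  proof (rule real_tendsto_sandwich[OF _ _ tendsto_const LIMSEQ_inverse_real_of_nat])
    show "\<forall>\<^sub>F n in sequentially. 0 \<le> g (s n)" using nonneg by simp
    show "\<forall>\<^sub>F n in sequentially. g (s n) \<le> inverse (real (Suc n))"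
      using s by (simp add: less_imp_le)
  qed
  have "Cauchy s"
  proof (rule metric_CauchyI)
    fix e :: real assume "e > 0"
    then obtain N where N: "\<And>n. n \<ge> N \<Longrightarrow> g (s n) < e / 2"
      using order_tendstoD(2)[OF g_s, of "e / 2"] by (auto simp: eventually_sequentially)
    have "dist (s m) (s n) < e" if "m \<ge> N" "n \<ge> N" for m n
      using N[OF that(1)] N[OF that(2)] triangle[of "s m" "s n"] by linarith
    then show "\<exists>M. \<forall>m\<ge>M. \<forall>n\<ge>M. dist (s m) (s n) < e" by blast
  qed
  then obtain x where x: "s \<longlonglongrightarrow> x"
    using Cauchy_convergent_iff convergent_def by blast
  have lim: "(\<lambda>n. g (s n) + dist (s n) x) \<longlonglongrightarrow> 0"
    using tendsto_add_zero[OF g_s tendsto_dist_iff[THEN iffD1, OF x]] .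
  have "g x \<le> g (s n) + dist (s n) x" for n
    using lipschitz[of x "s n"] by (simp add: dist_commute)
  then have "g x \<le> 0" using LIMSEQ_le_const[OF lim] by blast
  then show ?thesis using nonneg[of x] by auto
qed

lemma delta_adherent_eq_delta:
  assumes adh: "delta_adherent z \<phi>" and ext: "\<phi> \<in> Lip0 z \<rightarrow>\<^sub>E UNIV"
    and x0: "virtual_dist z \<phi> x0 = 0"
  shows "\<phi> = delta z x0"
proof
  fix f
  show "\<phi> f = delta z x0 f"
  proof (cases "f \<in> Lip0 z")
    case f: True
    have L: "0 \<le> lipnorm f" by (rule lipnorm_nonneg[OF f])
    have "\<bar>f x0 - \<phi> f\<bar> \<le> 0"
    proof (rule field_le_epsilon)
      fix e :: real assume "e > 0"
      define \<eta> where "\<eta> = e / (lipnorm f + 1)"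
      have \<eta>: "\<eta> > 0" using \<open>e > 0\<close> L by (simp add: \<eta>_def)
      have "lipnorm f * \<eta> + \<eta> = (lipnorm f + 1) * \<eta>" by (simp add: algebra_simps)
      also have "\<dots> = e" using L by (simp add: \<eta>_def)
      finally have e_eq: "lipnorm f * \<eta> + \<eta> = e" .
      obtain x where x: "\<bar>f x - \<phi> f\<bar> < \<eta>" "\<bar>dist x x0 - virtual_dist z \<phi> x0\<bar> < \<eta>"
        using delta_adherent_witness[OF adh, of "{f}" "{x0}" \<eta>] f \<eta> by auto
      have "\<bar>f x0 - f x\<bar> \<le> lipnorm f * \<eta>"
        using Lip0_lipnorm_bound[OF f, of x0 x] mult_left_mono[of "dist x0 x" \<eta> "lipnorm f"] x(2) x0 L
        by (simp add: dist_commute)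
      then show "\<bar>f x0 - \<phi> f\<bar> \<le> 0 + e" using x(1) e_eq by linarith
    qed
    then show ?thesis using f by (simp add: delta_def)
  next
    case False
    then show ?thesis by (simp add: delta_def PiE_arb[OF ext])
  qed
qed

lemma FreeSpace_delta_adherent_in_range:
  fixes z :: "'a::complete_space"
  assumes \<phi>: "\<phi> \<in> FreeSpace z" and adh: "delta_adherent z \<phi>"
  shows "\<phi> \<in> range (delta z)"
proof -
  obtain x0 where "virtual_dist z \<phi> x0 = 0"
    using dist_function_attains_zero[of "virtual_dist z \<phi>"]
      virtual_dist_triangle[OF adh] virtual_dist_le_add_dist[OF adh]
      virtual_dist_approx_zero[OF \<phi> adh] by metis
  moreover have "\<phi> \<in> Lip0 z \<rightarrow>\<^sub>E UNIV"
    using \<phi> unfolding FreeSpace_def Lip0_dual_def by blast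
  ultimately show ?thesis using delta_adherent_eq_delta[OF adh] by blast
qed

lemma openin_powertop_real_near:
  assumes "finite F" "F \<subseteq> I"
  shows "openin (powertop_real I) {\<psi> \<in> topspace (powertop_real I). \<forall>i\<in>F. \<bar>\<psi> i - \<phi> i\<bar> < \<eta>}"
proof -
  have "openin (powertop_real I)
          ((\<Inter>i\<in>F. {\<psi> \<in> topspace (powertop_real I). \<psi> i \<in> ball (\<phi> i) \<eta>}) \<inter> topspace (powertop_real I))"
  proof (rule openin_INT[OF assms(1)])
    fix i assume "i \<in> F"
    then have "continuous_map (powertop_real I) euclideanreal (\<lambda>\<psi>. \<psi> i)"
      using assms by (intro continuous_map_product_projection) auto
    then show "openin (powertop_real I) {\<psi> \<in> topspace (powertop_real I). \<psi> i \<in> ball (\<phi> i) \<eta>}"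
      by (rule openin_continuous_map_preimage) simp
  qed
  moreover have "(\<Inter>i\<in>F. {\<psi> \<in> topspace (powertop_real I). \<psi> i \<in> ball (\<phi> i) \<eta>}) \<inter> topspace (powertop_real I)
      = {\<psi> \<in> topspace (powertop_real I). \<forall>i\<in>F. \<bar>\<psi> i - \<phi> i\<bar> < \<eta>}"
    by (auto simp: dist_real_def abs_minus_commute)
  ultimately show ?thesis by simp
qed

lemma closedin_subtopology_powertop_realI:
  assumes subset: "A \<subseteq> topspace (powertop_real I) \<inter> S"
    and adherent: "\<And>\<phi>. \<phi> \<in> topspace (powertop_real I) \<inter> S \<Longrightarrow>
       (\<And>F \<eta>. finite F \<Longrightarrow> F \<subseteq> I \<Longrightarrow> \<eta> > 0 \<Longrightarrow> \<exists>\<psi>\<in>A. \<forall>i\<in>F. \<bar>\<psi> i - \<phi> i\<bar> < \<eta>) \<Longrightarrow> \<phi> \<in> A"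
  shows "closedin (subtopology (powertop_real I) S) A"
  unfolding closedin_def topspace_subtopology
proof (intro conjI subset, subst openin_subopen, intro ballI)
  let ?X = "powertop_real I"
  fix \<phi> assume \<phi>: "\<phi> \<in> topspace ?X \<inter> S - A"
  have "\<exists>F \<eta>. finite F \<and> F \<subseteq> I \<and> \<eta> > 0 \<and> (\<forall>\<psi>\<in>A. \<not> (\<forall>i\<in>F. \<bar>\<psi> i - \<phi> i\<bar> < \<eta>))"
  proof (rule ccontr)
    assume "\<not> ?thesis"
    then have "\<phi> \<in> A" using \<phi> by (intro adherent) auto
    then show False using \<phi> by blast
  qed
  then obtain F \<eta> where F: "finite F" "F \<subseteq> I" "\<eta> > 0"
    and far: "\<forall>\<psi>\<in>A. \<not> (\<forall>i\<in>F. \<bar>\<psi> i - \<phi> i\<bar> < \<eta>)"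
    by blast
  define W where "W = {\<psi> \<in> topspace ?X. \<forall>i\<in>F. \<bar>\<psi> i - \<phi> i\<bar> < \<eta>}"
  have "openin (subtopology ?X S) (W \<inter> S)"
    unfolding openin_subtopology W_def using openin_powertop_real_near[OF F(1,2)] by blast
  moreover have "\<phi> \<in> W \<inter> S" "W \<inter> S \<subseteq> topspace ?X \<inter> S - A"
    using \<phi> F(3) far by (auto simp: W_def)
  ultimately show "\<exists>T. openin (subtopology ?X S) T \<and> \<phi> \<in> T \<and> T \<subseteq> topspace ?X \<inter> S - A"
    by blast
qed

theorem proposition2p9:
  fixes z :: "'a::complete_space"
  shows "closedin (weak_top_Free z) (range (delta z))"
  unfolding weak_top_Free_def
proof (rule closedin_subtopology_powertop_realI)
  show "range (delta z) \<subseteq> topspace (powertop_real (Lip0 z)) \<inter> FreeSpace z"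
    using delta_in_delta_span delta_span_subset_FreeSpace
    by (auto simp: delta_def topspace_product_topology)
next
  fix \<phi> assume \<phi>: "\<phi> \<in> topspace (powertop_real (Lip0 z)) \<inter> FreeSpace z"
    and near: "\<And>F \<eta>. finite F \<Longrightarrow> F \<subseteq> Lip0 z \<Longrightarrow> \<eta> > 0 \<Longrightarrow>
      \<exists>\<psi>\<in>range (delta z). \<forall>f\<in>F. \<bar>\<psi> f - \<phi> f\<bar> < \<eta>"
  have "delta_adherent z \<phi>"
    unfolding delta_adherent_def
  proof (intro allI impI)
    fix F \<eta> assume F: "finite F" "F \<subseteq> Lip0 z" "(\<eta>::real) > 0"
    then obtain x where "\<forall>f\<in>F. \<bar>delta z x f - \<phi> f\<bar> < \<eta>" using near by blast
    moreover have "delta z x f = f x" if "f \<in> F" for f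
      using that F(2) by (auto simp: delta_def)
    ultimately show "\<exists>x. \<forall>f\<in>F. \<bar>f x - \<phi> f\<bar> < \<eta>" by auto
  qed
  then show "\<phi> \<in> range (delta z)"
    using \<phi> by (blast intro: FreeSpace_delta_adherent_in_range)
qed

end
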